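(* Let $S$ be an inverse semigroup with zero. Then there is an order isomorphism (with respect to inclusion) between the set of proper filters of $S$ and the set of prime filters of $\mathsf{D}(S)$.
   Context: The natural partial order is used; $X^{\uparrow}=\{s: x\le s \text{ for some } x\in X\}$, $X^{\downarrow}=\{s : s\le x \text{ for some } x\in X\}$. A filter in an inverse semigroup is a nonempty subset $F$ with $F=F^{\uparrow}$ such that for all $a,b\in F$ there is $c\in F$ with $c\le a,b$; it is proper if it does not contain zero. Elements $s,t$ are compatible if $s^{-1}t,st^{-1}$ are idempotents. $\mathsf{D}(S)$ is the set of subsets $\{a_1,\dots,a_m\}^{\downarrow}$ with $\{a_1,\dots,a_m\}$ a finite compatible subset of $S$, under subset multiplication, ordered by inclusion; it is a distributive inverse semigroup (joins of compatible elements are unions, and its zero is $\{0\}$). A prime filter of a distributive inverse semigroup is a proper filter $P$ such that whenever $a,b$ are compatible and $a\vee b\in P$, then $a\in P$ or $b\in P$. *)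

theory Defs
  imports Main
begin

definition is_inv :: "'a set \<Rightarrow> ('a \<Rightarrow> 'a \<Rightarrow> 'a) \<Rightarrow> 'a \<Rightarrow> 'a \<Rightarrow> bool" where
  "is_inv C m a b \<longleftrightarrow> b \<in> C \<and> m (m a b) a = a \<and> m (m b a) b = b"

definition inverse_semigroup :: "'a set \<Rightarrow> ('a \<Rightarrow> 'a \<Rightarrow> 'a) \<Rightarrow> bool" where
  "inverse_semigroup C m \<longleftrightarrow>
     (\<forall>a\<in>C. \<forall>b\<in>C. m a b \<in> C) \<and>
     (\<forall>a\<in>C. \<forall>b\<in>C. \<forall>c\<in>C. m (m a b) c = m a (m b c)) \<and>
     (\<forall>a\<in>C. \<exists>!b. is_inv C m a b)"

definition sinv :: "'a set \<Rightarrow> ('a \<Rightarrow> 'a \<Rightarrow> 'a) \<Rightarrow> 'a \<Rightarrow> 'a" where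
  "sinv C m a = (THE b. is_inv C m a b)"

definition idem :: "'a set \<Rightarrow> ('a \<Rightarrow> 'a \<Rightarrow> 'a) \<Rightarrow> 'a \<Rightarrow> bool" where
  "idem C m e \<longleftrightarrow> e \<in> C \<and> m e e = e"

definition is_zero :: "'a set \<Rightarrow> ('a \<Rightarrow> 'a \<Rightarrow> 'a) \<Rightarrow> 'a \<Rightarrow> bool" where
  "is_zero C m z \<longleftrightarrow> z \<in> C \<and> (\<forall>x\<in>C. m z x = z \<and> m x z = z)"

definition nat_le :: "'a set \<Rightarrow> ('a \<Rightarrow> 'a \<Rightarrow> 'a) \<Rightarrow> 'a \<Rightarrow> 'a \<Rightarrow> bool" where
  "nat_le C m s t \<longleftrightarrow> s \<in> C \<and> t \<in> C \<and> (\<exists>e. idem C m e \<and> s = m e t)"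

definition up_closure :: "'a set \<Rightarrow> ('a \<Rightarrow> 'a \<Rightarrow> bool) \<Rightarrow> 'a set \<Rightarrow> 'a set" where
  "up_closure C le X = {s \<in> C. \<exists>x\<in>X. le x s}"

definition down_closure :: "'a set \<Rightarrow> ('a \<Rightarrow> 'a \<Rightarrow> bool) \<Rightarrow> 'a set \<Rightarrow> 'a set" where
  "down_closure C le X = {s \<in> C. \<exists>x\<in>X. le s x}"

definition is_filter :: "'a set \<Rightarrow> ('a \<Rightarrow> 'a \<Rightarrow> bool) \<Rightarrow> 'a set \<Rightarrow> bool" where
  "is_filter C le F \<longleftrightarrow> F \<noteq> {} \<and> F \<subseteq> C \<and> F = up_closure C le F \<and>
     (\<forall>a\<in>F. \<forall>b\<in>F. \<exists>c\<in>F. le c a \<and> le c b)"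

definition proper_filter :: "'a set \<Rightarrow> ('a \<Rightarrow> 'a \<Rightarrow> bool) \<Rightarrow> 'a \<Rightarrow> 'a set \<Rightarrow> bool" where
  "proper_filter C le z F \<longleftrightarrow> is_filter C le F \<and> z \<notin> F"

definition compatible :: "'a set \<Rightarrow> ('a \<Rightarrow> 'a \<Rightarrow> 'a) \<Rightarrow> 'a \<Rightarrow> 'a \<Rightarrow> bool" where
  "compatible C m s t \<longleftrightarrow> idem C m (m (sinv C m s) t) \<and> idem C m (m s (sinv C m t))"

definition setmult :: "('a \<Rightarrow> 'a \<Rightarrow> 'a) \<Rightarrow> 'a set \<Rightarrow> 'a set \<Rightarrow> 'a set" where
  "setmult m A B = {m a b | a b. a \<in> A \<and> b \<in> B}"

definition Dset :: "'a set \<Rightarrow> ('a \<Rightarrow> 'a \<Rightarrow> 'a) \<Rightarrow> 'a set set" where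
  "Dset C m = {down_closure C (nat_le C m) X | X.
      finite X \<and> X \<noteq> {} \<and> X \<subseteq> C \<and> (\<forall>s\<in>X. \<forall>t\<in>X. compatible C m s t)}"

text \<open>Prime filters of D(S): ordered by inclusion, zero {z}, joins of compatible elements are unions.\<close>
definition prime_filter_D :: "'a set \<Rightarrow> ('a \<Rightarrow> 'a \<Rightarrow> 'a) \<Rightarrow> 'a \<Rightarrow> 'a set set \<Rightarrow> bool" where
  "prime_filter_D C m z P \<longleftrightarrow>
     proper_filter (Dset C m) (\<subseteq>) {z} P \<and>
     (\<forall>a\<in>Dset C m. \<forall>b\<in>Dset C m.
        compatible (Dset C m) (setmult m) a b \<and> a \<union> b \<in> P \<longrightarrow> a \<in> P \<or> b \<in> P)"

end

theory Submission imports Defs begin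

text \<open>A proper filter \<open>F\<close> of \<open>S\<close> is sent to the set of those \<open>A \<in> D(S)\<close> that meet \<open>F\<close>;
  this filter of \<open>D(S)\<close> is prime because \<open>A \<union> B\<close> meets \<open>F\<close> only if \<open>A\<close> or \<open>B\<close> does.
  Conversely, \<open>{a\<^sub>1,\<dots>,a\<^sub>n}\<^sup>\<down>\<close> is the compatible join of the principal ideals \<open>a\<^sub>i\<^sup>\<down>\<close>, so a
  prime filter \<open>P\<close> of \<open>D(S)\<close> is determined by the elements \<open>s\<close> with \<open>s\<^sup>\<down> \<in> P\<close>, and these form
  a proper filter of \<open>S\<close>. The one delicate point is that primeness refers to compatibility in
  \<open>D(S)\<close>, hence to inverses in \<open>D(S)\<close>: these are \<open>A \<mapsto> A\<^sup>-\<^sup>1\<close>, because \<open>D(S)\<close> is regular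
  and its idempotents, being sets of idempotents of \<open>S\<close>, commute.\<close>

lemma is_inv_unique_if_idempotents_commute:
  assumes assoc: "\<And>x y w. x \<in> C \<Longrightarrow> y \<in> C \<Longrightarrow> w \<in> C \<Longrightarrow> p (p x y) w = p x (p y w)"
    and closed: "\<And>x y. x \<in> C \<Longrightarrow> y \<in> C \<Longrightarrow> p x y \<in> C"
    and a: "a \<in> C" and b: "is_inv C p a b" and c: "is_inv C p a c"
    and comm_right: "p (p b a) (p c a) = p (p c a) (p b a)"
    and comm_left: "p (p a b) (p a c) = p (p a c) (p a b)"
  shows "b = c"
proof -
  have C: "b \<in> C" "c \<in> C" and aba: "p (p a b) a = a" and bab: "p (p b a) b = b"
    and aca: "p (p a c) a = a" and cac: "p (p c a) c = c"
    using b c unfolding is_inv_def by auto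
  note simps = assoc closed a C
  have "b = p (p b (p (p a c) a)) b" using bab aca by simp
  also have "\<dots> = p (p (p b a) (p c a)) b" by (simp add: simps)
  also have "\<dots> = p (p (p c a) (p b a)) b" using comm_right by simp
  also have "\<dots> = p (p c a) (p (p b a) b)" by (simp add: simps)
  finally have b_eq: "b = p (p c a) b" using bab by simp
  have "c = p (p c (p (p a b) a)) c" using cac aba by simp
  also have "\<dots> = p c (p (p a b) (p a c))" by (simp add: simps)
  also have "\<dots> = p c (p (p a c) (p a b))" using comm_left by simp
  also have "\<dots> = p (p (p (p c a) c) a) b" by (simp add: simps)
  finally have "c = p (p c a) b" using cac by (simp add: simps)
  then show ?thesis using b_eq by simp
qed

lemma is_filter_upward:
  assumes "is_filter C r F" "x \<in> F" "s \<in> C" "r x s"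
  shows "s \<in> F"
proof -
  have "s \<in> up_closure C r F" unfolding up_closure_def using assms(2-4) by blast
  then show ?thesis using assms(1) unfolding is_filter_def by blast
qed

lemma is_filter_subset: "is_filter C r F \<Longrightarrow> F \<subseteq> C"
  by (simp add: is_filter_def)

lemma is_filter_nonempty: "is_filter C r F \<Longrightarrow> F \<noteq> {}"
  by (simp add: is_filter_def)

lemma is_filter_lower_bound: "is_filter C r F \<Longrightarrow> a \<in> F \<Longrightarrow> b \<in> F \<Longrightarrow> \<exists>c\<in>F. r c a \<and> r c b"
  by (simp add: is_filter_def)

lemma is_filterI:
  assumes "F \<noteq> {}" "F \<subseteq> C" "\<And>x. x \<in> F \<Longrightarrow> r x x"
    "\<And>x s. x \<in> F \<Longrightarrow> s \<in> C \<Longrightarrow> r x s \<Longrightarrow> s \<in> F"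
    "\<And>a b. a \<in> F \<Longrightarrow> b \<in> F \<Longrightarrow> \<exists>c\<in>F. r c a \<and> r c b"
  shows "is_filter C r F"
proof -
  have "F = up_closure C r F" unfolding up_closure_def using assms(2-4) by blast
  then show ?thesis unfolding is_filter_def using assms(1,2,5) by blast
qed

locale inv_semigroup =
  fixes S :: "'a set" and m :: "'a \<Rightarrow> 'a \<Rightarrow> 'a"
  assumes inverse_semigroup: "inverse_semigroup S m"
begin

abbreviation i where "i \<equiv> sinv S m"
abbreviation E where "E \<equiv> idem S m"
abbreviation le where "le \<equiv> nat_le S m"

lemma mult_closed [simp]: "a \<in> S \<Longrightarrow> b \<in> S \<Longrightarrow> m a b \<in> S"
  using inverse_semigroup unfolding inverse_semigroup_def by blast

lemma mult_assoc: "a \<in> S \<Longrightarrow> b \<in> S \<Longrightarrow> c \<in> S \<Longrightarrow> m (m a b) c = m a (m b c)"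
  using inverse_semigroup unfolding inverse_semigroup_def by blast

lemma is_inv_sinv: "a \<in> S \<Longrightarrow> is_inv S m a (i a)"
  unfolding sinv_def using inverse_semigroup unfolding inverse_semigroup_def by (blast intro: theI')

lemma sinv_unique: "a \<in> S \<Longrightarrow> is_inv S m a b \<Longrightarrow> b = i a"
  using is_inv_sinv inverse_semigroup unfolding inverse_semigroup_def by blast

lemma sinv_closed [simp]: "a \<in> S \<Longrightarrow> i a \<in> S"
  using is_inv_sinv unfolding is_inv_def by simp

lemma mult_sinv_mult [simp]: "a \<in> S \<Longrightarrow> m a (m (i a) a) = a"
  using is_inv_sinv[of a] unfolding is_inv_def by (simp add: mult_assoc)

lemma sinv_mult_sinv [simp]: "a \<in> S \<Longrightarrow> m (i a) (m a (i a)) = i a"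
  using is_inv_sinv[of a] unfolding is_inv_def by (simp add: mult_assoc)

lemma mult_sinv_mult_left [simp]: "a \<in> S \<Longrightarrow> t \<in> S \<Longrightarrow> m a (m (i a) (m a t)) = m a t"
  by (metis mult_assoc mult_closed mult_sinv_mult sinv_closed)

lemma sinv_sinv [simp]: "a \<in> S \<Longrightarrow> i (i a) = a"
  using sinv_unique[of "i a" a] by (simp add: is_inv_def mult_assoc)

lemma idem_closed: "E e \<Longrightarrow> e \<in> S"
  by (simp add: idem_def)

lemma idem_mult_idem: "E e \<Longrightarrow> t \<in> S \<Longrightarrow> m e (m e t) = m e t"
  by (metis mult_assoc idem_def)

lemma sinv_idem: "E e \<Longrightarrow> i e = e"
  by (metis idem_def sinv_unique is_inv_def)

lemma idem_mult_sinv: "a \<in> S \<Longrightarrow> E (m a (i a))"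
  by (simp add: idem_def mult_assoc)

lemma idem_sinv_mult: "a \<in> S \<Longrightarrow> E (m (i a) a)"
  using idem_mult_sinv[of "i a"] by simp

text \<open>The inverse \<open>x\<close> of \<open>e f\<close> equals its conjugate \<open>f x e\<close>, which makes \<open>x\<close> idempotent and
  hence self-inverse; uniqueness of inverses then gives \<open>e f = x\<close>.\<close>
lemma idem_mult_closed:
  assumes e: "E e" and f: "E f"
  shows "E (m e f)"
proof -
  have S: "e \<in> S" "f \<in> S" using e f idem_closed by auto
  define x where "x = i (m e f)"
  have xS: "x \<in> S" using S x_def by simp
  have "m (m e f) (m x (m e f)) = m e f" using S unfolding x_def by simp
  then have efxef: "m e (m f (m x (m e f))) = m e f" using S xS by (simp add: mult_assoc)
  have "m x (m (m e f) x) = x" using S unfolding x_def by simp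
  then have xefx: "m x (m e (m f x)) = x" using S xS by (simp add: mult_assoc)
  have xefx_right: "m x (m e (m f (m x t))) = m x t" if "t \<in> S" for t
  proof -
    have "m x (m e (m f (m x t))) = m (m x (m e (m f x))) t" using S xS that by (simp add: mult_assoc)
    then show ?thesis using xefx by simp
  qed
  have "is_inv S m (m e f) (m f (m x e))"
    unfolding is_inv_def using S xS efxef xefx_right e f
    by (simp add: mult_assoc idem_mult_idem)
  then have x_conj: "m f (m x e) = x"
    using sinv_unique[of "m e f" "m f (m x e)"] S x_def by simp
  have "m x x = m (m f (m x e)) (m f (m x e))" using x_conj by simp
  also have "\<dots> = m f (m x (m e (m f (m x e))))" using S xS by (simp add: mult_assoc)
  also have "\<dots> = x" using xefx_right[of e] S x_conj by simp
  finally have Ex: "E x" using xS unfolding idem_def by simp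
  have "is_inv S m x (m e f)"
    unfolding is_inv_def using S xS efxef xefx by (simp add: mult_assoc)
  then have "m e f = x" using sinv_unique[OF xS] sinv_idem[OF Ex] by simp
  then show ?thesis using Ex by simp
qed

lemma idem_commute:
  assumes e: "E e" and f: "E f"
  shows "m e f = m f e"
proof -
  have S: "e \<in> S" "f \<in> S" using e f idem_closed by auto
  have Eef: "E (m e f)" and Efe: "E (m f e)" using idem_mult_closed e f by auto
  have ee: "m e (m e t) = m e t" and ff: "m f (m f t) = m f t" if "t \<in> S" for t
    using idem_mult_idem e f that by auto
  have "m e (m f (m e f)) = m e f" "m f (m e (m f e)) = m f e"
    using Eef Efe S unfolding idem_def by (simp_all add: mult_assoc)
  then have "is_inv S m (m e f) (m f e)"
    using S unfolding is_inv_def by (simp add: mult_assoc ee ff)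
  then have "m f e = i (m e f)" using sinv_unique S by simp
  then show ?thesis using sinv_idem[OF Eef] by simp
qed

lemma idem_conj: "E e \<Longrightarrow> t \<in> S \<Longrightarrow> E (m t (m e (i t)))"
proof -
  assume e: "E e" and t: "t \<in> S"
  have eS: "e \<in> S" using e idem_closed by auto
  have "m (m t (m e (i t))) (m t (m e (i t))) = m t (m (m e (m (i t) t)) (m e (i t)))"
    using eS t by (simp add: mult_assoc)
  also have "\<dots> = m t (m (m (i t) t) (m (m e e) (i t)))"
    using idem_commute[OF e idem_sinv_mult[OF t]] eS t by (simp add: mult_assoc)
  also have "\<dots> = m t (m e (i t))" using e eS t by (simp add: idem_def mult_assoc)
  finally show ?thesis unfolding idem_def using eS t by simp
qed

lemma sinv_mult: "a \<in> S \<Longrightarrow> b \<in> S \<Longrightarrow> i (m a b) = m (i b) (i a)"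
proof -
  have reg: "m (m (m a b) (m (i b) (i a))) (m a b) = m a b" if a: "a \<in> S" and b: "b \<in> S" for a b
  proof -
    have "m (m (m a b) (m (i b) (i a))) (m a b) = m a (m (m (m b (i b)) (m (i a) a)) b)"
      using a b by (simp add: mult_assoc)
    also have "\<dots> = m a (m (m (m (i a) a) (m b (i b))) b)"
      using idem_commute idem_mult_sinv idem_sinv_mult a b by metis
    also have "\<dots> = m a b" using a b by (simp add: mult_assoc)
    finally show ?thesis .
  qed
  assume a: "a \<in> S" and b: "b \<in> S"
  have "is_inv S m (m a b) (m (i b) (i a))"
    using reg[OF a b] reg[of "i b" "i a"] a b unfolding is_inv_def by simp
  then show ?thesis using sinv_unique a b by simp
qed

lemma nat_le_closed: "le s t \<Longrightarrow> s \<in> S \<and> t \<in> S"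
  by (simp add: nat_le_def)

lemma nat_le_idem_mult: "t \<in> S \<Longrightarrow> E e \<Longrightarrow> le (m e t) t"
  unfolding nat_le_def using idem_closed by auto

lemma nat_le_refl: "t \<in> S \<Longrightarrow> le t t"
  using nat_le_idem_mult[OF _ idem_mult_sinv, of t t] by (simp add: mult_assoc)

lemma nat_le_trans: "le s t \<Longrightarrow> le t u \<Longrightarrow> le s u"
  unfolding nat_le_def by (metis mult_assoc idem_closed idem_mult_closed)

lemma nat_le_antisym:
  assumes "le s t" "le t s"
  shows "s = t"
proof -
  obtain e f where e: "E e" "s = m e t" and f: "E f" "t = m f s" and t: "t \<in> S"
    using assms unfolding nat_le_def by auto
  have S: "e \<in> S" "f \<in> S" using e f idem_closed by auto
  have t_eq: "t = m f (m e t)" using e f by simp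
  then have "m e t = m (m e f) (m e t)" using S t by (metis mult_assoc mult_closed)
  also have "\<dots> = m f (m e t)"
    using idem_commute[OF e(1) f(1)] S t idem_mult_idem[OF e(1)] by (simp add: mult_assoc)
  finally show ?thesis using e(2) t_eq by simp
qed

lemma nat_le_mult_idem: "t \<in> S \<Longrightarrow> E f \<Longrightarrow> le (m t f) t"
proof -
  assume t: "t \<in> S" and f: "E f"
  have fS: "f \<in> S" using f idem_closed by auto
  have "m (m t (m f (i t))) t = m t (m (m (i t) t) f)"
    using idem_commute[OF f idem_sinv_mult[OF t]] t fS by (simp add: mult_assoc)
  then have "m t f = m (m t (m f (i t))) t" using t fS by (simp add: mult_assoc)
  then show ?thesis using nat_le_idem_mult[OF t idem_conj[OF f t]] by simp
qed

lemma nat_le_mult_right: "le s t \<Longrightarrow> u \<in> S \<Longrightarrow> le (m s u) (m t u)"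
  unfolding nat_le_def by (metis mult_assoc mult_closed idem_closed)

lemma nat_le_mult_left:
  assumes "le s t" "u \<in> S"
  shows "le (m u s) (m u t)"
proof -
  obtain e where e: "E e" "s = m e t" and t: "t \<in> S" using assms unfolding nat_le_def by auto
  have eS: "e \<in> S" using e idem_closed by auto
  have "m t (m (i t) (m e t)) = m (m (m t (i t)) e) t" using t eS by (simp add: mult_assoc)
  also have "\<dots> = m (m e (m t (i t))) t" using idem_commute[OF e(1) idem_mult_sinv[OF t]] by simp
  finally have "m e t = m t (m (i t) (m e t))" using t eS by (simp add: mult_assoc)
  then have "m u s = m (m u t) (m (i t) (m e t))"
    using e t eS assms(2) by (simp add: mult_assoc)
  then show ?thesis
    using nat_le_mult_idem[OF _ idem_conj[OF e(1), of "i t"]] t assms(2) by simp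
qed

lemma nat_le_sinv: "le s t \<Longrightarrow> le (i s) (i t)"
proof -
  assume "le s t"
  then obtain e where e: "E e" "s = m e t" and t: "t \<in> S" unfolding nat_le_def by auto
  have "i s = m (i t) e" using sinv_mult[of e t] e t sinv_idem idem_closed by simp
  then show ?thesis using nat_le_mult_idem[OF _ e(1)] t by simp
qed

lemma nat_le_idem: "le s f \<Longrightarrow> E f \<Longrightarrow> E s"
  unfolding nat_le_def using idem_mult_closed by auto

lemma finite_has_maximal_above:
  assumes "finite X" "X \<subseteq> S" "y \<in> X"
  shows "\<exists>x\<in>X. le y x \<and> (\<forall>w\<in>X. le x w \<longrightarrow> w = x)"
  using assms
proof (induction X arbitrary: y rule: finite_induct)
  case empty
  then show ?case by simp
next
  case (insert a X)
  show ?case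
  proof (cases "\<exists>w\<in>X. le y w")
    case True
    then obtain w where w: "w \<in> X" "le y w" by blast
    obtain x where x: "x \<in> X" "le w x" "\<forall>v\<in>X. le x v \<longrightarrow> v = x"
      using insert.IH[of w] w insert.prems by auto
    show ?thesis
    proof (cases "le x a")
      case True
      then show ?thesis
        using x w nat_le_trans nat_le_antisym by (metis insert_iff)
    next
      case False
      then show ?thesis using x nat_le_trans[OF w(2) x(2)] by blast
    qed
  next
    case False
    then show ?thesis using insert.prems nat_le_refl by blast
  qed
qed

lemma compatible_refl: "s \<in> S \<Longrightarrow> compatible S m s s"
  unfolding compatible_def using idem_mult_sinv idem_sinv_mult by auto

lemma compatible_nat_le:
  assumes "le s x" "le t y" "compatible S m x y"
  shows "compatible S m s t"
proof -
  have S: "s \<in> S" "t \<in> S" "x \<in> S" "y \<in> S" using assms nat_le_closed by auto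
  have "le (m (i s) t) (m (i x) y)"
    using nat_le_trans[OF nat_le_mult_right[OF nat_le_sinv[OF assms(1)]] nat_le_mult_left[OF assms(2)]] S
    by simp
  moreover have "le (m s (i t)) (m x (i y))"
    using nat_le_trans[OF nat_le_mult_right[OF assms(1)] nat_le_mult_left[OF nat_le_sinv[OF assms(2)]]] S
    by simp
  ultimately show ?thesis using assms(3) nat_le_idem unfolding compatible_def by blast
qed

lemma compatible_mult:
  assumes S: "x \<in> S" "x' \<in> S" "y \<in> S" "y' \<in> S"
    and c: "compatible S m x x'" "compatible S m y y'"
  shows "compatible S m (m x y) (m x' y')"
proof -
  have e: "E (m (i x) x')" "E (m x (i x'))" "E (m (i y) y')" "E (m y (i y'))"
    using c unfolding compatible_def by auto
  have "i (m x y) = m (i y) (i x)" "i (m x' y') = m (i y') (i x')" using S sinv_mult by auto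
  then have "m (i (m x y)) (m x' y') = m (i y) (m (m (i x) x') y')"
    and "m (m x y) (i (m x' y')) = m (m x (m y (i y'))) (i x')"
    using S by (simp_all add: mult_assoc)
  moreover have "le (m (i y) (m (m (i x) x') y')) (m (i y) y')"
    using nat_le_mult_left[OF nat_le_idem_mult[OF S(4) e(1)]] S by simp
  moreover have "le (m (m x (m y (i y'))) (i x')) (m x (i x'))"
    using nat_le_mult_right[OF nat_le_mult_idem[OF S(1) e(4)]] S by simp
  ultimately show ?thesis unfolding compatible_def using e nat_le_idem by metis
qed

abbreviation dc where "dc X \<equiv> down_closure S le X"
abbreviation D where "D \<equiv> Dset S m"
abbreviation sm where "sm \<equiv> setmult m"

definition compatible_set :: "'a set \<Rightarrow> bool" where
  "compatible_set X \<longleftrightarrow> finite X \<and> X \<noteq> {} \<and> X \<subseteq> S \<and> (\<forall>s\<in>X. \<forall>t\<in>X. compatible S m s t)"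

lemma mem_down_closure: "s \<in> dc X \<longleftrightarrow> s \<in> S \<and> (\<exists>x\<in>X. le s x)"
  by (simp add: down_closure_def)

lemma mem_down_closure_singleton: "s \<in> dc {t} \<longleftrightarrow> le s t"
  unfolding mem_down_closure using nat_le_closed by blast

lemma mem_Dset: "A \<in> D \<longleftrightarrow> (\<exists>X. compatible_set X \<and> A = dc X)"
  unfolding Dset_def compatible_set_def by blast

lemma mem_setmult: "x \<in> sm A B \<longleftrightarrow> (\<exists>a\<in>A. \<exists>b\<in>B. x = m a b)"
  unfolding setmult_def by blast

lemma setmultI: "a \<in> A \<Longrightarrow> b \<in> B \<Longrightarrow> m a b \<in> sm A B"
  unfolding mem_setmult by blast

lemma Dset_subset: "A \<in> D \<Longrightarrow> A \<subseteq> S"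
  unfolding mem_Dset down_closure_def by blast

lemma Dset_downward:
  assumes "A \<in> D" "s \<in> A" "le t s"
  shows "t \<in> A"
proof -
  obtain X where A: "A = dc X" using assms(1) unfolding mem_Dset by blast
  show ?thesis using assms(2,3) nat_le_trans nat_le_closed unfolding A mem_down_closure by blast
qed

lemma Dset_compatible:
  assumes "A \<in> D" "s \<in> A" "t \<in> A"
  shows "compatible S m s t"
proof -
  obtain X where X: "compatible_set X" and A: "A = dc X" using assms(1) unfolding mem_Dset by blast
  show ?thesis
    using assms(2,3) X compatible_nat_le unfolding A mem_down_closure compatible_set_def by blast
qed

lemma down_closure_singleton_Dset: "s \<in> S \<Longrightarrow> dc {s} \<in> D"
  unfolding mem_Dset compatible_set_def using compatible_refl by blast

lemma mem_down_closure_self: "s \<in> S \<Longrightarrow> s \<in> dc {s}"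
  unfolding mem_down_closure_singleton using nat_le_refl .

lemma down_closure_singleton_subset: "A \<in> D \<Longrightarrow> s \<in> A \<Longrightarrow> dc {s} \<subseteq> A"
  using Dset_downward by (auto simp: mem_down_closure_singleton)

lemma down_closure_zero:
  assumes "is_zero S m z"
  shows "dc {z} = {z}"
proof -
  have "t = z" if tz: "le t z" for t
  proof -
    obtain e where "E e" "t = m e z" using tz unfolding nat_le_def by blast
    then show ?thesis using assms idem_closed unfolding is_zero_def by auto
  qed
  moreover have "le z z" using assms nat_le_refl unfolding is_zero_def by blast
  ultimately show ?thesis by (auto simp: mem_down_closure_singleton)
qed

lemma setmult_assoc:
  assumes "A \<subseteq> S" "B \<subseteq> S" "C \<subseteq> S"
  shows "sm (sm A B) C = sm A (sm B C)"
proof (rule set_eqI)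
  fix x
  have "x \<in> sm (sm A B) C \<longleftrightarrow> (\<exists>a\<in>A. \<exists>b\<in>B. \<exists>c\<in>C. x = m (m a b) c)"
    unfolding setmult_def by blast
  also have "\<dots> \<longleftrightarrow> (\<exists>a\<in>A. \<exists>b\<in>B. \<exists>c\<in>C. x = m a (m b c))"
    using assms by (simp add: subset_iff mult_assoc)
  also have "\<dots> \<longleftrightarrow> x \<in> sm A (sm B C)"
    unfolding setmult_def by blast
  finally show "x \<in> sm (sm A B) C \<longleftrightarrow> x \<in> sm A (sm B C)" .
qed

lemma setmult_closed: "A \<subseteq> S \<Longrightarrow> B \<subseteq> S \<Longrightarrow> sm A B \<subseteq> S"
  unfolding setmult_def by (auto simp: subset_iff)

lemma setmult_idem_commute: "\<forall>a\<in>A. E a \<Longrightarrow> \<forall>b\<in>B. E b \<Longrightarrow> sm A B = sm B A"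
  unfolding setmult_def using idem_commute by blast

lemma down_closure_setmult:
  assumes "X \<subseteq> S" "Y \<subseteq> S"
  shows "sm (dc X) (dc Y) = dc (sm X Y)"
proof
  show "sm (dc X) (dc Y) \<subseteq> dc (sm X Y)"
  proof
    fix s assume "s \<in> sm (dc X) (dc Y)"
    then obtain a b x y where ab: "s = m a b" "le a x" "le b y" "x \<in> X" "y \<in> Y"
      by (auto simp: mem_setmult mem_down_closure)
    have "le (m a b) (m x y)"
      using nat_le_trans[OF nat_le_mult_right[OF ab(2)] nat_le_mult_left[OF ab(3)]] nat_le_closed ab
      by blast
    then show "s \<in> dc (sm X Y)"
      unfolding mem_down_closure using ab nat_le_closed setmultI by blast
  qed
next
  show "dc (sm X Y) \<subseteq> sm (dc X) (dc Y)"
  proof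
    fix s assume "s \<in> dc (sm X Y)"
    then obtain x y where xy: "le s (m x y)" "x \<in> X" "y \<in> Y"
      by (auto simp: mem_down_closure mem_setmult)
    then obtain e where e: "E e" "s = m e (m x y)" unfolding nat_le_def by blast
    have S: "x \<in> S" "y \<in> S" "e \<in> S" using xy assms e idem_closed by auto
    have "s = m (m e x) y" using e S by (simp add: mult_assoc)
    moreover have "m e x \<in> dc X"
      unfolding mem_down_closure using nat_le_idem_mult[OF S(1) e(1)] xy S by auto
    moreover have "y \<in> dc Y" unfolding mem_down_closure using S xy nat_le_refl by auto
    ultimately show "s \<in> sm (dc X) (dc Y)" using setmultI by simp
  qed
qed

lemma compatible_set_setmult:
  assumes "compatible_set X" "compatible_set Y"
  shows "compatible_set (sm X Y)"
proof -
  have "sm X Y = (\<lambda>(x, y). m x y) ` (X \<times> Y)" unfolding setmult_def by auto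
  then have "finite (sm X Y)" using assms unfolding compatible_set_def by simp
  moreover have "compatible S m s t" if st: "s \<in> sm X Y" "t \<in> sm X Y" for s t
  proof -
    obtain x y x' y' where "x \<in> X" "y \<in> Y" "s = m x y" "x' \<in> X" "y' \<in> Y" "t = m x' y'"
      using st unfolding mem_setmult by blast
    then show ?thesis
      using assms compatible_mult unfolding compatible_set_def by (simp add: subset_iff)
  qed
  ultimately show ?thesis
    using assms setmult_closed unfolding compatible_set_def setmult_def by auto
qed

lemma Dset_setmult:
  assumes "A \<in> D" "B \<in> D"
  shows "sm A B \<in> D"
proof -
  obtain X Y where X: "compatible_set X" "A = dc X" and Y: "compatible_set Y" "B = dc Y"
    using assms unfolding mem_Dset by blast
  then have "sm A B = dc (sm X Y)" using down_closure_setmult unfolding compatible_set_def by blast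
  then show ?thesis using compatible_set_setmult[OF X(1) Y(1)] unfolding mem_Dset by blast
qed

lemma down_closure_image_sinv:
  assumes "X \<subseteq> S"
  shows "dc (i ` X) = i ` dc X"
proof
  show "dc (i ` X) \<subseteq> i ` dc X"
  proof
    fix s assume "s \<in> dc (i ` X)"
    then obtain x where x: "x \<in> X" "le s (i x)" unfolding mem_down_closure by blast
    moreover have "x \<in> S" using x(1) assms by blast
    ultimately have "i s \<in> dc X" using nat_le_sinv[OF x(2)] nat_le_closed
      unfolding mem_down_closure by auto
    moreover have "s = i (i s)" using x(2) nat_le_closed by simp
    ultimately show "s \<in> i ` dc X" by blast
  qed
  show "i ` dc X \<subseteq> dc (i ` X)"
    using nat_le_sinv nat_le_closed by (fastforce simp: mem_down_closure)
qed

lemma Dset_image_sinv: "A \<in> D \<Longrightarrow> i ` A \<in> D"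
  unfolding mem_Dset
proof (elim exE conjE)
  fix X assume X: "compatible_set X" "A = dc X"
  have "compatible_set (i ` X)"
    using X(1) unfolding compatible_set_def compatible_def by (auto simp: subset_iff)
  moreover have "i ` A = dc (i ` X)"
    using X down_closure_image_sinv unfolding compatible_set_def by blast
  ultimately show "\<exists>Y. compatible_set Y \<and> i ` A = dc Y" by blast
qed

lemma Dset_mult_image_sinv_mult:
  assumes A: "A \<in> D"
  shows "sm (sm A (i ` A)) A = A"
proof
  show "sm (sm A (i ` A)) A \<subseteq> A"
  proof
    fix s assume "s \<in> sm (sm A (i ` A)) A"
    then obtain a1 a2 a3 where a: "a1 \<in> A" "a2 \<in> A" "a3 \<in> A" "s = m (m a1 (i a2)) a3"
      by (auto simp: mem_setmult)
    have "E (m a1 (i a2))" using Dset_compatible[OF A a(1,2)] unfolding compatible_def by simp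
    then show "s \<in> A"
      using nat_le_idem_mult a Dset_subset[OF A] Dset_downward[OF A a(3)] by auto
  qed
  show "A \<subseteq> sm (sm A (i ` A)) A"
  proof
    fix a assume a: "a \<in> A"
    then have "a = m (m a (i a)) a" using Dset_subset[OF A] by (auto simp: mult_assoc)
    then show "a \<in> sm (sm A (i ` A)) A" using a setmultI by (metis imageI)
  qed
qed

lemma is_inv_Dset_image_sinv:
  assumes A: "A \<in> D"
  shows "is_inv D sm A (i ` A)"
proof -
  have "i ` i ` A = A" using Dset_subset[OF A] by (auto simp: subset_iff image_iff)
  then show ?thesis
    using Dset_image_sinv[OF A] Dset_mult_image_sinv_mult[OF A]
      Dset_mult_image_sinv_mult[OF Dset_image_sinv[OF A]]
    unfolding is_inv_def by simp
qed

text \<open>If \<open>A A = A\<close>, take \<open>x\<close> maximal in \<open>A\<close>; writing \<open>x = p q\<close> with \<open>p, q \<in> A\<close>, compatibility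
  within \<open>A\<close> gives \<open>x \<le> p\<close> and \<open>x \<le> q\<close>, so \<open>p = q = x\<close> by maximality and \<open>x\<close> is idempotent.\<close>
lemma Dset_idem_elements:
  assumes A: "A \<in> D" and AA: "sm A A = A" and a: "a \<in> A"
  shows "E a"
proof -
  obtain X where X: "compatible_set X" "A = dc X" using A unfolding mem_Dset by blast
  have XS: "finite X" "X \<subseteq> S" using X(1) unfolding compatible_set_def by auto
  obtain y where y: "y \<in> X" "le a y" using a unfolding X(2) mem_down_closure by blast
  obtain x where x: "x \<in> X" "le y x" and x_max: "\<forall>w\<in>X. le x w \<longrightarrow> w = x"
    using finite_has_maximal_above[OF XS y(1)] by blast
  have xS: "x \<in> S" using x XS by auto
  have xA: "x \<in> A" unfolding X(2) mem_down_closure using x xS nat_le_refl by blast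
  have maximal: "r = x" if r: "r \<in> A" "le x r" for r
  proof -
    obtain w where w: "w \<in> X" "le r w" using r(1) unfolding X(2) mem_down_closure by blast
    then have "w = x" using x_max nat_le_trans[OF r(2)] by blast
    then show "r = x" using nat_le_antisym r w by blast
  qed
  have "x \<in> sm A A" using xA AA by simp
  then obtain p q where pq: "p \<in> A" "q \<in> A" "x = m p q" unfolding mem_setmult by blast
  have pqS: "p \<in> S" "q \<in> S" using pq Dset_subset[OF A] by auto
  have "E (m (i p) x)" "E (m x (i q))"
    using Dset_compatible[OF A pq(1) xA] Dset_compatible[OF A xA pq(2)]
    unfolding compatible_def by simp_all
  then have "le (m p (m (i p) x)) p" "le (m (m x (i q)) q) q"
    using nat_le_mult_idem nat_le_idem_mult pqS by blast+
  moreover have "m p (m (i p) x) = x" "m (m x (i q)) q = x" using pq pqS by (simp_all add: mult_assoc)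
  ultimately have "le x p" "le x q" by simp_all
  then have "p = x" "q = x" using maximal pq(1,2) by blast+
  then have "m x x = x" using pq(3) by metis
  then have "E x" using xS unfolding idem_def by simp
  then show "E a" using nat_le_idem nat_le_trans[OF y(2) x(2)] by blast
qed

lemma Dset_idem_if_idem_elements:
  assumes C: "C \<in> D" and idem: "\<forall>c\<in>C. E c"
  shows "sm C C = C"
proof
  show "sm C C \<subseteq> C"
  proof
    fix x assume "x \<in> sm C C"
    then obtain c d where cd: "c \<in> C" "d \<in> C" "x = m c d" unfolding mem_setmult by blast
    then have "le x d" using nat_le_idem_mult idem Dset_subset[OF C] by blast
    then show "x \<in> C" using Dset_downward[OF C cd(2)] by blast
  qed
  show "C \<subseteq> sm C C"
    using idem setmultI[of _ C _ C] unfolding idem_def by fastforce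
qed

lemma Dset_mult_is_inv_idem_elements:
  assumes A: "A \<in> D" and U: "is_inv D sm A U" and x: "x \<in> sm A U"
  shows "E x"
proof -
  have UD: "U \<in> D" and AUA: "sm (sm A U) A = A" using U unfolding is_inv_def by auto
  have "sm (sm A U) (sm A U) = sm (sm (sm A U) A) U"
    using A UD Dset_subset setmult_closed setmult_assoc by metis
  then have "sm (sm A U) (sm A U) = sm A U" using AUA by simp
  then show ?thesis using Dset_idem_elements Dset_setmult[OF A UD] x by blast
qed

lemma sinv_Dset:
  assumes A: "A \<in> D"
  shows "sinv D sm A = i ` A"
proof -
  have inv: "is_inv D sm A (i ` A)" using is_inv_Dset_image_sinv[OF A] .
  have "B = i ` A" if B: "is_inv D sm A B" for B
  proof (rule is_inv_unique_if_idempotents_commute[where C = D and p = sm])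
    have flip: "is_inv D sm U A" if "is_inv D sm A U" for U
      using that A unfolding is_inv_def by blast
    have "U \<in> D" if "is_inv D sm A U" for U using that unfolding is_inv_def by blast
    then show "sm (sm B A) (sm (i ` A) A) = sm (sm (i ` A) A) (sm B A)"
      "sm (sm A B) (sm A (i ` A)) = sm (sm A (i ` A)) (sm A B)"
      using setmult_idem_commute Dset_mult_is_inv_idem_elements flip A B inv by metis+
  qed (use A B inv Dset_subset setmult_assoc Dset_setmult in auto)
  then show ?thesis
    unfolding sinv_def[of D sm A] using inv by (rule the_equality[rotated])
qed

lemma compatible_Dset_union:
  assumes A: "A \<in> D" and B: "B \<in> D" and AB: "A \<union> B \<in> D"
  shows "compatible D sm A B"
proof -
  have idem: "E (m (i a) b)" "E (m a (i b))" if "a \<in> A" "b \<in> B" for a b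
    using Dset_compatible[OF AB] that unfolding compatible_def by auto
  have "sm (i ` A) B \<in> D" "sm A (i ` B) \<in> D"
    using Dset_setmult Dset_image_sinv A B by auto
  moreover have "\<forall>x\<in>sm (i ` A) B. E x" "\<forall>x\<in>sm A (i ` B). E x"
    using idem by (auto simp: mem_setmult)
  ultimately have "sm (sm (i ` A) B) (sm (i ` A) B) = sm (i ` A) B"
    "sm (sm A (i ` B)) (sm A (i ` B)) = sm A (i ` B)"
    using Dset_idem_if_idem_elements by blast+
  with \<open>sm (i ` A) B \<in> D\<close> \<open>sm A (i ` B) \<in> D\<close> show ?thesis
    unfolding compatible_def sinv_Dset[OF A] sinv_Dset[OF B] idem_def by blast
qed

definition filter_lift :: "'a set \<Rightarrow> 'a set set" where
  "filter_lift F = {A \<in> D. A \<inter> F \<noteq> {}}"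

definition filter_restrict :: "'a set set \<Rightarrow> 'a set" where
  "filter_restrict P = {s \<in> S. dc {s} \<in> P}"

lemma prime_filter_D_filter_lift:
  assumes F: "proper_filter S le z F"
  shows "prime_filter_D S m z (filter_lift F)"
proof -
  have Ff: "is_filter S le F" and zF: "z \<notin> F" using F unfolding proper_filter_def by auto
  have principal: "dc {s} \<in> filter_lift F" if "s \<in> F" for s
    using that is_filter_subset[OF Ff] down_closure_singleton_Dset mem_down_closure_self
    unfolding filter_lift_def by blast
  have "is_filter D (\<subseteq>) (filter_lift F)"
  proof (rule is_filterI)
    show "filter_lift F \<noteq> {}" using is_filter_nonempty[OF Ff] principal by blast
    fix A B assume "A \<in> filter_lift F" "B \<in> filter_lift F"
    then obtain a b where ab: "a \<in> A" "a \<in> F" "b \<in> B" "b \<in> F" "A \<in> D" "B \<in> D"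
      unfolding filter_lift_def by blast
    obtain c where c: "c \<in> F" "le c a" "le c b" using is_filter_lower_bound[OF Ff ab(2,4)] by blast
    then have "dc {c} \<subseteq> A" "dc {c} \<subseteq> B"
      using Dset_downward down_closure_singleton_subset ab by blast+
    then show "\<exists>C\<in>filter_lift F. C \<subseteq> A \<and> C \<subseteq> B" using principal c by blast
  qed (auto simp: filter_lift_def)
  moreover have "{z} \<notin> filter_lift F" unfolding filter_lift_def using zF by blast
  ultimately show ?thesis
    unfolding prime_filter_D_def proper_filter_def by (auto simp: filter_lift_def)
qed

lemma filter_lift_subset_iff:
  assumes "F \<subseteq> S" "is_filter S le G"
  shows "filter_lift F \<subseteq> filter_lift G \<longleftrightarrow> F \<subseteq> G"
proof
  assume lift: "filter_lift F \<subseteq> filter_lift G"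
  show "F \<subseteq> G"
  proof
    fix s assume "s \<in> F"
    then have "dc {s} \<in> filter_lift G"
      using lift assms(1) down_closure_singleton_Dset mem_down_closure_self
      unfolding filter_lift_def by blast
    then obtain t where "le t s" "t \<in> G" by (auto simp: filter_lift_def mem_down_closure_singleton)
    then show "s \<in> G" using is_filter_upward[OF assms(2)] nat_le_closed by blast
  qed
qed (auto simp: filter_lift_def)

lemma prime_filter_D_down_closure:
  assumes P: "prime_filter_D S m z P" and X: "compatible_set X" and XP: "dc X \<in> P"
  shows "\<exists>x\<in>X. dc {x} \<in> P"
proof -
  have prime: "B \<in> P \<or> C \<in> P" if "B \<in> D" "C \<in> D" "compatible D sm B C" "B \<union> C \<in> P" for B C
    using P that unfolding prime_filter_D_def by blast
  have "finite X" "X \<noteq> {}" using X unfolding compatible_set_def by auto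
  then show ?thesis using X XP
  proof (induction X rule: finite_ne_induct)
    case (singleton x)
    then show ?case by simp
  next
    case (insert x X)
    have X: "compatible_set X" and xS: "x \<in> S"
      using insert.prems insert.hyps unfolding compatible_set_def by auto
    have union: "dc (insert x X) = dc {x} \<union> dc X" unfolding down_closure_def by blast
    have "dc {x} \<in> D" "dc X \<in> D" "dc {x} \<union> dc X \<in> D"
      using down_closure_singleton_Dset[OF xS] X insert.prems(1)
      unfolding union[symmetric] mem_Dset by blast+
    then have "dc {x} \<in> P \<or> dc X \<in> P"
      using prime compatible_Dset_union insert.prems(2) union by simp
    then show ?case using insert.IH X by blast
  qed
qed

lemma prime_filter_D_is_filter: "prime_filter_D S m z P \<Longrightarrow> is_filter D (\<subseteq>) P"
  by (simp add: prime_filter_D_def proper_filter_def)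

lemma prime_filter_D_principal:
  assumes P: "prime_filter_D S m z P" and A: "A \<in> P"
  shows "\<exists>s\<in>A. dc {s} \<in> P"
proof -
  have "A \<in> D" using A is_filter_subset[OF prime_filter_D_is_filter[OF P]] by blast
  then obtain X where X: "compatible_set X" and A_eq: "A = dc X" unfolding mem_Dset by blast
  then obtain x where x: "x \<in> X" "dc {x} \<in> P" using prime_filter_D_down_closure P A by blast
  then have "x \<in> A" using X nat_le_refl unfolding A_eq compatible_set_def mem_down_closure by blast
  then show ?thesis using x by blast
qed

lemma filter_lift_filter_restrict:
  assumes P: "prime_filter_D S m z P"
  shows "filter_lift (filter_restrict P) = P"
proof -
  note Pf = prime_filter_D_is_filter[OF P]
  have "A \<in> P" if "A \<in> D" "s \<in> A" "dc {s} \<in> P" for A s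
    using is_filter_upward[OF Pf] down_closure_singleton_subset that by blast
  then show ?thesis
    using prime_filter_D_principal[OF P] Dset_subset is_filter_subset[OF Pf]
    unfolding filter_lift_def filter_restrict_def by blast
qed

lemma proper_filter_filter_restrict:
  assumes P: "prime_filter_D S m z P" and z: "is_zero S m z"
  shows "proper_filter S le z (filter_restrict P)"
proof -
  note Pf = prime_filter_D_is_filter[OF P]
  have "is_filter S le (filter_restrict P)"
  proof (rule is_filterI)
    show "filter_restrict P \<noteq> {}"
      using filter_lift_filter_restrict[OF P] is_filter_nonempty[OF Pf]
      unfolding filter_lift_def by auto
    show "s \<in> filter_restrict P" if xs: "x \<in> filter_restrict P" "s \<in> S" "le x s" for x s
    proof -
      have "dc {x} \<subseteq> dc {s}" using xs(3) nat_le_trans by (auto simp: mem_down_closure_singleton)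
      then show ?thesis
        using xs is_filter_upward[OF Pf] down_closure_singleton_Dset
        unfolding filter_restrict_def by blast
    qed
    fix a b assume "a \<in> filter_restrict P" "b \<in> filter_restrict P"
    then obtain C where C: "C \<in> P" "C \<subseteq> dc {a}" "C \<subseteq> dc {b}"
      using is_filter_lower_bound[OF Pf] unfolding filter_restrict_def by blast
    then obtain c where c: "c \<in> C" "dc {c} \<in> P" using prime_filter_D_principal[OF P] by blast
    then have "le c a" "le c b" using C mem_down_closure_singleton by blast+
    then show "\<exists>c\<in>filter_restrict P. le c a \<and> le c b"
      using c nat_le_closed unfolding filter_restrict_def by blast
  qed (auto simp: filter_restrict_def nat_le_refl)
  moreover have "{z} \<notin> P" using P unfolding prime_filter_D_def proper_filter_def by blast
  then have "z \<notin> filter_restrict P"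
    using down_closure_zero[OF z] unfolding filter_restrict_def by simp
  ultimately show ?thesis unfolding proper_filter_def by blast
qed

end

theorem lemma2p14:
  fixes S :: "'a set" and m :: "'a \<Rightarrow> 'a \<Rightarrow> 'a" and z :: 'a
  assumes "inverse_semigroup S m" and "is_zero S m z"
  shows "\<exists>f. bij_betw f {F. proper_filter S (nat_le S m) z F} {P. prime_filter_D S m z P} \<and>
    (\<forall>F\<in>{F. proper_filter S (nat_le S m) z F}. \<forall>G\<in>{F. proper_filter S (nat_le S m) z F}.
        F \<subseteq> G \<longleftrightarrow> f F \<subseteq> f G)"
proof -
  interpret inv_semigroup S m using assms(1) by unfold_locales
  let ?proper = "{F. proper_filter S (nat_le S m) z F}"
  have order_embedding: "\<forall>F\<in>?proper. \<forall>G\<in>?proper. F \<subseteq> G \<longleftrightarrow> filter_lift F \<subseteq> filter_lift G"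
  proof (intro ballI)
    fix F G assume "F \<in> ?proper" "G \<in> ?proper"
    then have "is_filter S le F" "is_filter S le G" by (simp_all add: proper_filter_def)
    then show "F \<subseteq> G \<longleftrightarrow> filter_lift F \<subseteq> filter_lift G"
      using filter_lift_subset_iff[OF is_filter_subset] by blast
  qed
  moreover have "inj_on filter_lift ?proper"
    using order_embedding by (intro inj_onI) blast
  moreover have "filter_lift ` ?proper = {P. prime_filter_D S m z P}"
    using prime_filter_D_filter_lift filter_lift_filter_restrict
      proper_filter_filter_restrict[OF _ assms(2)] by blast
  ultimately show ?thesis unfolding bij_betw_def by blast
qed

end
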